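(* Let $\mathcal A$ be a $C^*$-algebra with identity $1$ and $\delta\colon\mathcal A\to\mathcal A$ a $^*$-endomorphism. The following are equivalent: 1) there exists a complete transfer operator $\delta_*$ for $(\mathcal A,\delta)$; 2) (i) there exists a non-degenerate transfer operator $\delta_*$ for $(\mathcal A,\delta)$, and (ii) $\delta(\mathcal A)$ is a hereditary subalgebra of $\mathcal A$; 3) (i) there exists a central orthogonal projection $P\in\mathcal A$ such that (a) $\delta(P)=\delta(1)$ and (b) the restriction $\delta\colon P\mathcal A\to\delta(\mathcal A)$ is a $^*$-isomorphism; and (ii) $\delta(\mathcal A)=\delta(1)\mathcal A\delta(1)$. Moreover, the transfer operator $\delta_*$ in 1) and in 2) is unique, the projection $P$ in 3) is unique, $P=\delta_*(1)$, and $\delta_*(a)=\delta^{-1}(\delta(1)a\delta(1))$ for all $a\in\mathcal A$, where $\delta^{-1}\colon\delta(\mathcal A)\to P\mathcal A$ is the inverse of the $^*$-isomorphism $\delta\colon P\mathcal A\to\delta(\mathcal A)$.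
   Context: A transfer operator for $(\mathcal A,\delta)$ is a continuous positive linear map $\delta_*\colon\mathcal A\to\mathcal A$ such that $\delta_*(\delta(a)b)=a\,\delta_*(b)$ for all $a,b\in\mathcal A$. It is non-degenerate if $\delta(\delta_*(1))=\delta(1)$ (equivalently $\delta\circ\delta_*\circ\delta=\delta$). It is complete if $\delta(\delta_*(a))=\delta(1)a\delta(1)$ for all $a\in\mathcal A$. *)

theory Defs
  imports Complex_Main
begin

class cstar_algebra = banach + real_normed_algebra + ring_1 +
  fixes scaleC :: "complex \<Rightarrow> 'a \<Rightarrow> 'a"
    and cstar :: "'a \<Rightarrow> 'a"
  assumes scaleC_add_right: "scaleC c (x + y) = scaleC c x + scaleC c y"
    and scaleC_add_left: "scaleC (c + d) x = scaleC c x + scaleC d x"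
    and scaleC_scaleC: "scaleC c (scaleC d x) = scaleC (c * d) x"
    and scaleC_one: "scaleC 1 x = x"
    and scaleR_scaleC: "scaleR r x = scaleC (complex_of_real r) x"
    and norm_scaleC: "norm (scaleC c x) = cmod c * norm x"
    and mult_scaleC_left: "scaleC c x * y = scaleC c (x * y)"
    and mult_scaleC_right: "x * scaleC c y = scaleC c (x * y)"
    and cstar_cstar: "cstar (cstar x) = x"
    and cstar_add: "cstar (x + y) = cstar x + cstar y"
    and cstar_scaleC: "cstar (scaleC c x) = scaleC (cnj c) (cstar x)"
    and cstar_mult: "cstar (x * y) = cstar y * cstar x"
    and cstar_identity: "norm (cstar x * x) = (norm x)\<^sup>2"

definition cstar_invertible :: "'a::cstar_algebra \<Rightarrow> bool" where
  "cstar_invertible x \<longleftrightarrow> (\<exists>y. x * y = 1 \<and> y * x = 1)"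

definition cstar_spectrum :: "'a::cstar_algebra \<Rightarrow> complex set" where
  "cstar_spectrum a = {z. \<not> cstar_invertible (a - scaleC z 1)}"

definition cstar_positive :: "'a::cstar_algebra \<Rightarrow> bool" where
  "cstar_positive a \<longleftrightarrow> cstar a = a \<and> cstar_spectrum a \<subseteq> complex_of_real ` {0..}"

definition clinear_map :: "('a::cstar_algebra \<Rightarrow> 'a) \<Rightarrow> bool" where
  "clinear_map f \<longleftrightarrow> (\<forall>x y. f (x + y) = f x + f y) \<and> (\<forall>c x. f (scaleC c x) = scaleC c (f x))"

definition star_endomorphism :: "('a::cstar_algebra \<Rightarrow> 'a) \<Rightarrow> bool" where
  "star_endomorphism d \<longleftrightarrow> clinear_map d \<and> (\<forall>x y. d (x * y) = d x * d y)
      \<and> (\<forall>x. d (cstar x) = cstar (d x))"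

definition transfer_operator :: "('a::cstar_algebra \<Rightarrow> 'a) \<Rightarrow> ('a::cstar_algebra \<Rightarrow> 'a) \<Rightarrow> bool" where
  "transfer_operator d T \<longleftrightarrow> continuous_on UNIV T \<and> clinear_map T
      \<and> (\<forall>a. cstar_positive a \<longrightarrow> cstar_positive (T a))
      \<and> (\<forall>a b. T (d a * b) = a * T b)"

definition nondegenerate_transfer_operator :: "('a::cstar_algebra \<Rightarrow> 'a) \<Rightarrow> ('a::cstar_algebra \<Rightarrow> 'a) \<Rightarrow> bool" where
  "nondegenerate_transfer_operator d T \<longleftrightarrow> transfer_operator d T \<and> d (T 1) = d 1"

definition complete_transfer_operator :: "('a::cstar_algebra \<Rightarrow> 'a) \<Rightarrow> ('a::cstar_algebra \<Rightarrow> 'a) \<Rightarrow> bool" where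
  "complete_transfer_operator d T \<longleftrightarrow> transfer_operator d T \<and> (\<forall>a. d (T a) = d 1 * a * d 1)"

text \<open>C*-subalgebra: closed *-subalgebra (not necessarily containing 1).\<close>
definition cstar_subalgebra ::"'a::cstar_algebra set \<Rightarrow> bool" where
  "cstar_subalgebra B \<longleftrightarrow> closed B \<and> 0 \<in> B \<and> (\<forall>x\<in>B. \<forall>y\<in>B. x + y \<in> B \<and> x * y \<in> B)
      \<and> (\<forall>c. \<forall>x\<in>B. scaleC c x \<in> B) \<and> (\<forall>x\<in>B. cstar x \<in> B)"

definition hereditary_subalgebra ::"'a::cstar_algebra set \<Rightarrow> bool" where
  "hereditary_subalgebra B \<longleftrightarrow> cstar_subalgebra B
      \<and> (\<forall>a b. b \<in> B \<and> cstar_positive a \<and> cstar_positive (b - a) \<longrightarrow> a \<in> B)"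

definition central_projection :: "'a::cstar_algebra \<Rightarrow> bool" where
  "central_projection P \<longleftrightarrow> cstar P = P \<and> P * P = P \<and> (\<forall>a. P * a = a * P)"

text \<open>Condition 3(i): P central projection, d P = d 1, and the restriction of d to P A
  is a bijection onto d(A) (being the restriction of a *-homomorphism, this is a *-isomorphism).\<close>
definition cond3i :: "('a::cstar_algebra \<Rightarrow> 'a) \<Rightarrow> 'a::cstar_algebra \<Rightarrow> bool" where
  "cond3i d P \<longleftrightarrow> central_projection P \<and> d P = d 1 \<and> bij_betw d (range (\<lambda>a. P * a)) (range d)"

end

(*
  Everything rests on one analytic fact: the norm of a self-adjoint element is bounded by any
  bound on its spectrum. It is proved without holomorphic functional calculus. If the spectrum
  of x lies in the open unit disc, averaging the resolvent (1 - l x)^-1 over the 2^k-th roots of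
  unity gives (1 - l^2^k x^2^k)^-1, with a Lipschitz constant in l independent of k. For
  self-adjoint x of norm q > 1 we have norm (t^2^k x^2^k) = (t q)^2^k, which tends to 0 just
  below t = 1/q and blows up just above it; the uniform Lipschitz bound forbids this jump.

  Consequently a self-adjoint a is positive iff norm (t - a) <= t for t >= norm a, so the
  positive elements form a cone, compressions p a p of positive elements are positive, and
  0 <= a <= b = p b p forces a = p a p. This gives that the range of d is hereditary as soon as
  it is the corner d(1) A d(1), which is what completeness says.

  A transfer operator T is automatically *-preserving, P = T 1 is a central projection, and
  nondegeneracy makes d injective on P A. Conversely, under 3) the operator is recovered as the
  inverse of d on P A applied to the compression a -> d(1) a d(1); it is positive and contractive
  because the injective *-homomorphism d on P A preserves the nonzero spectrum and is
  therefore isometric.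
*)

theory Submission
  imports Defs "HOL-Analysis.Analysis"
begin

lemma cstar_one [simp]: "cstar (1::'a::cstar_algebra) = 1"
  by (metis cstar_cstar cstar_mult mult_1_left)

instance cstar_algebra \<subseteq> real_normed_algebra_1
proof
  have "norm (1::'a) = (norm (1::'a))\<^sup>2"
    using cstar_identity[of "1::'a"] by simp
  then show "norm (1::'a) = 1"
    by (simp add: power2_eq_square)
qed

declare cstar_cstar [simp] cstar_add [simp] scaleC_one [simp] scaleC_scaleC [simp]
  mult_scaleC_left [simp] mult_scaleC_right [simp]

lemma cstar_zero [simp]: "cstar (0::'a::cstar_algebra) = 0"
  by (metis add_cancel_right_right cstar_add)

lemma cstar_minus [simp]: "cstar (- x) = - cstar (x::'a::cstar_algebra)"
  by (metis add_eq_0_iff cstar_add cstar_zero)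

lemma cstar_diff [simp]: "cstar (x - y) = cstar x - cstar (y::'a::cstar_algebra)"
  by (metis cstar_add cstar_minus diff_conv_add_uminus)

lemma cstar_scaleR [simp]: "cstar (scaleR r x) = scaleR r (cstar (x::'a::cstar_algebra))"
  by (simp add: scaleR_scaleC cstar_scaleC)

lemma cstar_power: "cstar (x ^ n) = cstar (x::'a::cstar_algebra) ^ n"
  by (induction n) (auto simp: cstar_mult power_commutes)

lemma scaleC_zero_left [simp]: "scaleC 0 (x::'a::cstar_algebra) = 0"
  by (metis add_cancel_right_right add_0 scaleC_add_left)

lemma scaleC_zero_right [simp]: "scaleC c (0::'a::cstar_algebra) = 0"
  by (metis add_cancel_right_right add_0 scaleC_add_right)

lemma scaleC_minus_left: "scaleC (- c) (x::'a::cstar_algebra) = - scaleC c x"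
  by (metis add_eq_0_iff neg_eq_iff_add_eq_0 scaleC_add_left scaleC_zero_left add.right_inverse)

lemma scaleC_minus_right: "scaleC c (- x::'a::cstar_algebra) = - scaleC c x"
  by (metis add_eq_0_iff scaleC_add_right scaleC_zero_right)

lemma scaleC_diff_left: "scaleC (c - d) (x::'a::cstar_algebra) = scaleC c x - scaleC d x"
  by (metis diff_conv_add_uminus scaleC_add_left scaleC_minus_left)

lemma scaleC_diff_right: "scaleC c (x - y::'a::cstar_algebra) = scaleC c x - scaleC c y"
  by (metis diff_conv_add_uminus scaleC_add_right scaleC_minus_right)

lemma scaleC_of_real: "scaleC (complex_of_real r) (x::'a::cstar_algebra) = scaleR r x"
  by (simp add: scaleR_scaleC)

lemma norm_selfadjoint_power_two_pow:
  assumes "cstar h = (h::'a::cstar_algebra)"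
  shows "norm (h ^ 2 ^ k) = norm h ^ 2 ^ k"
proof (induction k)
  case (Suc k)
  have "cstar (h ^ 2 ^ k) = h ^ 2 ^ k"
    using assms by (simp add: cstar_power)
  then have "norm (h ^ 2 ^ Suc k) = (norm (h ^ 2 ^ k))\<^sup>2"
    using cstar_identity[of "h ^ 2 ^ k"] by (simp flip: power_add add: mult_2)
  then show ?case
    using Suc.IH by (simp add: power_mult[symmetric] mult.commute)
qed simp

lemma cstar_decomposition:
  fixes x :: "'a::cstar_algebra"
  defines "h \<equiv> scaleR (1/2) (x + cstar x)" and "k \<equiv> scaleC (- \<i> / 2) (x - cstar x)"
  shows "cstar h = h" "cstar k = k" "x = h + scaleC \<i> k" "cstar x = h - scaleC \<i> k"
proof -
  have half: "scaleC (1/2) y + scaleC (1/2) y = y" for y :: 'a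
    by (simp flip: scaleC_add_left)
  have h: "h = scaleC (1/2) x + scaleC (1/2) (cstar x)"
    by (simp add: h_def scaleR_scaleC scaleC_add_right)
  have ik: "scaleC \<i> k = scaleC (1/2) x - scaleC (1/2) (cstar x)"
    by (simp add: k_def scaleC_diff_right)
  show "cstar h = h"
    by (simp add: h_def add.commute)
  have "cstar k = scaleC (\<i> / 2) (cstar x - x)"
    by (simp add: k_def cstar_scaleC)
  also have "\<dots> = k"
    by (simp add: k_def scaleC_minus_left scaleC_diff_right)
  finally show "cstar k = k" .
  show "x = h + scaleC \<i> k" "cstar x = h - scaleC \<i> k"
    unfolding h ik using half[of x] half[of "cstar x"] by (simp_all add: algebra_simps)
qed

section \<open>Invertibility and the Neumann series\<close>

lemma neumann_series:
  fixes e :: "'a::{banach, real_normed_algebra_1}"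
  assumes "norm e < 1"
  obtains y where "(1 - e) * y = 1" "y * (1 - e) = 1"
    "norm y \<le> 1 / (1 - norm e)" "norm (y - 1) \<le> norm e / (1 - norm e)"
proof -
  have summable_norm: "summable (\<lambda>n. norm e ^ n)"
    using assms by (simp add: summable_geometric)
  have summable: "summable (\<lambda>n. e ^ n)"
    by (rule summable_comparison_test[OF _ summable_norm]) (auto simp: norm_power_ineq)
  define y where "y = (\<Sum>n. e ^ n)"
  have telescope: "(\<lambda>n. e ^ n - e ^ Suc n) sums 1"
    using telescope_sums'[OF summable_LIMSEQ_zero[OF summable]] by simp
  have "(\<lambda>n. (1 - e) * e ^ n) sums ((1 - e) * y)"
    unfolding y_def by (rule sums_mult[OF summable_sums[OF summable]])
  moreover have "(\<lambda>n. (1 - e) * e ^ n) = (\<lambda>n. e ^ n - e ^ Suc n)"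
    by (auto simp: algebra_simps)
  ultimately have left: "(1 - e) * y = 1"
    using telescope sums_unique2 by fastforce
  have "(\<lambda>n. e ^ n * (1 - e)) sums (y * (1 - e))"
    unfolding y_def by (rule sums_mult2[OF summable_sums[OF summable]])
  moreover have "(\<lambda>n. e ^ n * (1 - e)) = (\<lambda>n. e ^ n - e ^ Suc n)"
    by (auto simp: algebra_simps power_commutes)
  ultimately have right: "y * (1 - e) = 1"
    using telescope sums_unique2 by fastforce
  have "norm y \<le> (\<Sum>n. norm e ^ n)"
    unfolding y_def by (rule norm_suminf_le[OF _ summable_norm]) (simp add: norm_power_ineq)
  also have "\<dots> = 1 / (1 - norm e)"
    using assms by (simp add: suminf_geometric)
  finally have bound: "norm y \<le> 1 / (1 - norm e)" .
  have "y - 1 = e * y"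
    using left by (simp add: algebra_simps)
  then have "norm (y - 1) \<le> norm e * norm y"
    by (simp add: norm_mult_ineq)
  also have "\<dots> \<le> norm e / (1 - norm e)"
    using mult_left_mono[OF bound norm_ge_zero[of e]] by simp
  finally show ?thesis
    using that left right bound by blast
qed

lemma norm_inverse_minus_one_le:
  fixes v :: "'a::{banach, real_normed_algebra_1}"
  assumes "(1 - v) * y = 1" and "norm v \<le> 1/2"
  shows "norm (y - 1) \<le> 2 * norm v"
proof -
  obtain y' where y': "y' * (1 - v) = 1" "norm (y' - 1) \<le> norm v / (1 - norm v)"
    using neumann_series[of v] assms(2) by force
  have "y = y'"
    using y'(1) assms(1) by (metis mult.assoc mult_1_left mult_1_right)
  moreover have "norm v / (1 - norm v) \<le> norm v / (1/2)"
    using assms(2) by (intro divide_left_mono) auto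
  ultimately show ?thesis
    using y'(2) by simp
qed

lemma norm_le_three_if_inverse_near_one:
  fixes v :: "'a::{banach, real_normed_algebra_1}"
  assumes "y * (1 - v) = 1" and "norm (y - 1) \<le> 1/2"
  shows "norm v \<le> 3"
proof -
  have e: "norm (1 - y) \<le> 1/2"
    using assms(2) by (simp add: norm_minus_commute)
  obtain z where z: "z * y = 1" "norm z \<le> 1 / (1 - norm (1 - y))"
    using neumann_series[of "1 - y"] e by force
  have "1 - v = z"
    using z(1) assms(1) by (metis mult.assoc mult_1_left mult_1_right)
  moreover have "1 / (1 - norm (1 - y)) \<le> 1 / (1/2)"
    using e by (intro divide_left_mono) auto
  ultimately have "norm (1 - v) \<le> 2"
    using z(2) by simp
  then show ?thesis
    using norm_triangle_ineq4[of 1 "1 - v"] by simp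
qed

definition cstar_inverse :: "'a::cstar_algebra \<Rightarrow> 'a" where
  "cstar_inverse x = (SOME y. x * y = 1 \<and> y * x = 1)"

lemma cstar_inverse_cancel:
  assumes "cstar_invertible x"
  shows "x * cstar_inverse x = 1" "cstar_inverse x * x = 1"
  using someI_ex[of "\<lambda>y. x * y = 1 \<and> y * x = 1"] assms
  unfolding cstar_invertible_def cstar_inverse_def by auto

lemma cstar_invertibleI: "x * y = 1 \<Longrightarrow> y * x = 1 \<Longrightarrow> cstar_invertible (x::'a::cstar_algebra)"
  unfolding cstar_invertible_def by blast

lemma cstar_invertible_one [simp]: "cstar_invertible (1::'a::cstar_algebra)"
  by (rule cstar_invertibleI[of 1 1]) simp_all

lemma cstar_invertible_mult:
  "cstar_invertible x \<Longrightarrow> cstar_invertible y \<Longrightarrow> cstar_invertible (x * y :: 'a::cstar_algebra)"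
  unfolding cstar_invertible_def by (metis mult.assoc mult_1_left)

lemma cstar_invertible_scaleC:
  assumes "c \<noteq> 0"
  shows "cstar_invertible (scaleC c x) \<longleftrightarrow> cstar_invertible (x::'a::cstar_algebra)"
proof -
  have *: "cstar_invertible (scaleC c x)" if c: "c \<noteq> 0" and x: "cstar_invertible x"
    for c and x :: 'a
  proof -
    obtain y where "x * y = 1" "y * x = 1"
      using x unfolding cstar_invertible_def by blast
    then show ?thesis
      using c by (intro cstar_invertibleI[of _ "scaleC (inverse c) y"]) simp_all
  qed
  show ?thesis
    using *[of c x] *[of "inverse c" "scaleC c x"] assms by auto
qed

lemma cstar_invertible_minus_iff: "cstar_invertible (- x) \<longleftrightarrow> cstar_invertible (x::'a::cstar_algebra)"
  using cstar_invertible_scaleC[of "-1" x] by (simp add: scaleC_minus_left)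

lemma cstar_invertible_one_minus: "norm e < 1 \<Longrightarrow> cstar_invertible (1 - e :: 'a::cstar_algebra)"
  by (metis cstar_invertibleI neumann_series)

section \<open>Spectrum\<close>

lemma mem_cstar_spectrum: "z \<in> cstar_spectrum x \<longleftrightarrow> \<not> cstar_invertible (x - scaleC z 1)"
  by (simp add: cstar_spectrum_def)

lemma cstar_spectrum_norm_le:
  assumes "z \<in> cstar_spectrum (x::'a::cstar_algebra)"
  shows "cmod z \<le> norm x"
proof (rule ccontr)
  assume "\<not> cmod z \<le> norm x"
  then have "z \<noteq> 0"
    by auto
  have "norm (scaleC (inverse z) x) = norm x / cmod z"
    by (simp add: norm_scaleC norm_inverse divide_inverse_commute)
  then have "norm (scaleC (inverse z) x) < 1"
    using \<open>\<not> cmod z \<le> norm x\<close> \<open>z \<noteq> 0\<close> by simp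
  then have "cstar_invertible (scaleC (- z) (1 - scaleC (inverse z) x))"
    using \<open>z \<noteq> 0\<close> by (simp add: cstar_invertible_scaleC cstar_invertible_one_minus)
  moreover have "scaleC (- z) (1 - scaleC (inverse z) x) = x - scaleC z 1"
    using \<open>z \<noteq> 0\<close> by (simp add: scaleC_diff_right scaleC_minus_left)
  ultimately show False
    using assms by (simp add: mem_cstar_spectrum)
qed

lemma cstar_spectrum_uminus: "z \<in> cstar_spectrum (- x) \<longleftrightarrow> - z \<in> cstar_spectrum (x::'a::cstar_algebra)"
proof -
  have "- x - scaleC z 1 = - (x - scaleC (- z) 1)"
    by (simp add: scaleC_minus_left)
  then show ?thesis
    unfolding mem_cstar_spectrum by (simp only: cstar_invertible_minus_iff)
qed

lemma cstar_spectrum_scaleC: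
  assumes "c \<noteq> 0"
  shows "z \<in> cstar_spectrum (scaleC c x) \<longleftrightarrow> z / c \<in> cstar_spectrum (x::'a::cstar_algebra)"
proof -
  have "scaleC c x - scaleC z 1 = scaleC c (x - scaleC (z / c) 1)"
    using assms by (simp add: scaleC_diff_right)
  then show ?thesis
    using assms by (simp add: mem_cstar_spectrum cstar_invertible_scaleC)
qed

lemma cstar_spectrum_selfadjoint_real:
  assumes selfadjoint: "cstar h = (h::'a::cstar_algebra)" and z: "z \<in> cstar_spectrum h"
  shows "Im z = 0"
proof (rule ccontr)
  assume "Im z \<noteq> 0"
  \<comment> \<open>Shifting by \<open>\<i> t\<close> moves \<open>z\<close> away from the real axis faster than it
    increases the norm.\<close>
  define t where "t = ((norm h)\<^sup>2 + 1) / (2 * Im z)"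
  have t: "2 * Im z * t = (norm h)\<^sup>2 + 1"
    using \<open>Im z \<noteq> 0\<close> by (simp add: t_def)
  define w where "w = scaleC (\<i> * complex_of_real t) (1::'a)"
  have "h + w - scaleC (z + \<i> * complex_of_real t) 1 = h - scaleC z 1"
    by (simp add: w_def scaleC_add_left)
  then have "z + \<i> * complex_of_real t \<in> cstar_spectrum (h + w)"
    using z unfolding mem_cstar_spectrum by (simp only: not_False_eq_True)
  then have "(cmod (z + \<i> * complex_of_real t))\<^sup>2 \<le> (norm (h + w))\<^sup>2"
    by (intro power_mono cstar_spectrum_norm_le) auto
  also have "(norm (h + w))\<^sup>2 = norm (h * h + scaleR (t\<^sup>2) 1)"
  proof -
    have "cstar w = - w"
      by (simp add: w_def cstar_scaleC flip: scaleC_minus_left)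
    moreover have "w * w = - scaleR (t\<^sup>2) 1"
      by (simp add: w_def scaleR_scaleC power2_eq_square algebra_simps flip: scaleC_minus_left)
    moreover have "h * w = w * h"
      by (simp add: w_def)
    ultimately have "cstar (h + w) * (h + w) = h * h + scaleR (t\<^sup>2) 1"
      using selfadjoint by (simp add: algebra_simps)
    then show ?thesis
      using cstar_identity[of "h + w"] by simp
  qed
  also have "\<dots> \<le> (norm h)\<^sup>2 + t\<^sup>2"
    using norm_triangle_ineq[of "h * h" "scaleR (t\<^sup>2) 1"] cstar_identity[of h] selfadjoint by simp
  finally have "(Re z)\<^sup>2 + (Im z + t)\<^sup>2 \<le> (norm h)\<^sup>2 + t\<^sup>2"
    by (simp add: cmod_power2)
  then have "(Re z)\<^sup>2 + (Im z)\<^sup>2 + 2 * Im z * t \<le> (norm h)\<^sup>2"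
    by (simp add: power2_eq_square algebra_simps)
  moreover have "0 \<le> (Re z)\<^sup>2 + (Im z)\<^sup>2"
    by simp
  ultimately show False
    using t by linarith
qed

lemma cstar_spectrum_quadratic:
  fixes x :: "'a::cstar_algebra"
  assumes "z \<in> cstar_spectrum (x * x + scaleC \<beta> x)"
  obtains m where "m \<in> cstar_spectrum x" "z = m * m + \<beta> * m"
proof -
  define r where "r = csqrt (\<beta> * \<beta> + 4 * z)"
  define m1 where "m1 = (r - \<beta>) / 2"
  define m2 where "m2 = (- r - \<beta>) / 2"
  have "r * r = \<beta> * \<beta> + 4 * z"
    using power2_csqrt[of "\<beta> * \<beta> + 4 * z"] by (simp add: r_def power2_eq_square)
  moreover have "(r - \<beta>) * (- r - \<beta>) = \<beta> * \<beta> - r * r"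
    by (simp add: algebra_simps)
  ultimately have roots: "\<beta> = - (m1 + m2)" "z = - (m1 * m2)"
    by (simp_all add: m1_def m2_def field_simps)
  have "(x - scaleC m1 1) * (x - scaleC m2 1) = x * x - scaleC m1 x - scaleC m2 x + scaleC (m1 * m2) 1"
    by (simp add: algebra_simps scaleC_diff_right)
  also have "\<dots> = x * x + scaleC \<beta> x - scaleC z 1"
    unfolding roots by (simp add: scaleC_minus_left scaleC_add_left scaleC_diff_left algebra_simps)
  finally have "\<not> cstar_invertible ((x - scaleC m1 1) * (x - scaleC m2 1))"
    using assms by (simp add: mem_cstar_spectrum)
  then have "m1 \<in> cstar_spectrum x \<or> m2 \<in> cstar_spectrum x"
    using cstar_invertible_mult by (auto simp: mem_cstar_spectrum)
  moreover have "z = m1 * m1 + \<beta> * m1" "z = m2 * m2 + \<beta> * m2"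
    unfolding roots by (simp_all add: algebra_simps)
  ultimately show ?thesis
    using that by blast
qed

section \<open>The norm of a self-adjoint element is bounded by its spectrum\<close>

lemma norm_mult_mult_le: "norm (a * b * c) \<le> norm a * norm b * norm (c::'a::real_normed_algebra)"
  by (meson mult_right_mono norm_ge_zero norm_mult_ineq order_trans)

lemma scaleR_half_two [simp]: "scaleR (1/2) (2::'a::real_algebra_1) = 1"
proof -
  have "(2::'a) = 1 + 1"
    by simp
  then have "scaleR (1/2) (2::'a) = scaleR (1/2) 1 + scaleR (1/2) 1"
    by (simp only: scaleR_add_right)
  also have "\<dots> = scaleR (1/2 + 1/2) 1"
    by (simp only: scaleR_add_left)
  finally show ?thesis
    by simp
qed

lemma mean_of_inverses:
  fixes a b u :: "'a::real_algebra_1"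
  assumes "a * (1 - u) = 1" "(1 - u) * a = 1" "b * (1 + u) = 1" "(1 + u) * b = 1"
  shows "scaleR (1/2) (a + b) * (1 - u * u) = 1" "(1 - u * u) * scaleR (1/2) (a + b) = 1"
proof -
  have "(a + b) * (1 - u * u) = a * (1 - u) * (1 + u) + b * (1 + u) * (1 - u)"
    by (simp add: algebra_simps)
  also have "\<dots> = 2"
    using assms by simp
  finally show "scaleR (1/2) (a + b) * (1 - u * u) = 1"
    by simp
  have "(1 - u * u) * (a + b) = (1 + u) * ((1 - u) * a) + (1 - u) * ((1 + u) * b)"
    by (simp add: algebra_simps)
  also have "\<dots> = 2"
    using assms by simp
  finally show "(1 - u * u) * scaleR (1/2) (a + b) = 1"
    by simp
qed

lemma power_two_pow_tendsto_zero:
  fixes a :: real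
  assumes "0 \<le> a" "a < 1"
  shows "(\<lambda>k. a ^ 2 ^ k) \<longlonglongrightarrow> 0"
proof (rule Lim_null_comparison)
  show "eventually (\<lambda>k. norm (a ^ 2 ^ k) \<le> a ^ k) sequentially"
    using assms by (intro always_eventually allI) (simp add: power_decreasing less_imp_le)
  show "(\<lambda>k. a ^ k) \<longlonglongrightarrow> 0"
    using assms by (intro LIMSEQ_power_zero) simp
qed

lemma eventually_less_power_two_pow:
  fixes b :: real
  assumes "1 < b"
  shows "eventually (\<lambda>k. c < b ^ 2 ^ k) sequentially"
proof -
  obtain n where "c < b ^ n"
    using real_arch_pow[OF assms] by blast
  moreover have "b ^ n \<le> b ^ 2 ^ k" if "n \<le> k" for k
  proof -
    have "n \<le> 2 ^ k"
      using that less_exp[of k] by linarith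
    then show ?thesis
      using assms by (intro power_increasing) auto
  qed
  ultimately show ?thesis
    unfolding eventually_sequentially by (meson less_le_trans)
qed

locale unit_disc_resolvent =
  fixes x :: "'a::cstar_algebra"
  assumes invertible: "cmod l \<le> 1 \<Longrightarrow> cstar_invertible (1 - scaleC l x)"
begin

definition res :: "complex \<Rightarrow> 'a" where
  "res l = cstar_inverse (1 - scaleC l x)"

lemma res_cancel:
  assumes "cmod l \<le> 1"
  shows "res l * (1 - scaleC l x) = 1" "(1 - scaleC l x) * res l = 1"
  using cstar_inverse_cancel[OF invertible[OF assms]] by (simp_all add: res_def)

lemma norm_res_diff_le:
  assumes "cmod l \<le> 1" "cmod m \<le> 1"
  shows "norm (res l - res m) \<le> cmod (l - m) * (norm (res l) * norm x * norm (res m))"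
proof -
  have "res l - res m = res l * ((1 - scaleC m x) * res m) - (res l * (1 - scaleC l x)) * res m"
    using res_cancel assms by simp
  also have "\<dots> = res l * ((1 - scaleC m x) - (1 - scaleC l x)) * res m"
    by (simp add: algebra_simps)
  also have "(1 - scaleC m x) - (1 - scaleC l x) = scaleC (l - m) x"
    by (simp add: scaleC_diff_left)
  finally have "res l - res m = scaleC (l - m) (res l * x * res m)"
    by (simp add: mult.assoc)
  then show ?thesis
    using norm_mult_mult_le[of "res l" x "res m"] by (simp add: norm_scaleC mult_left_mono)
qed

lemma norm_res_le_twice:
  assumes "cmod l \<le> 1" "cmod m \<le> 1" and small: "cmod (l - m) * (norm x * norm (res m)) \<le> 1/2"
  shows "norm (res l) \<le> 2 * norm (res m)"
proof -
  have "norm (res l) \<le> norm (res m) + norm (res l - res m)"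
    by (rule norm_triangle_sub)
  also have "\<dots> \<le> norm (res m) + norm (res l) * (cmod (l - m) * (norm x * norm (res m)))"
    using norm_res_diff_le[OF assms(1,2)] by (simp add: ac_simps)
  also have "\<dots> \<le> norm (res m) + norm (res l) * (1/2)"
    using small by (intro add_left_mono mult_left_mono) auto
  finally show ?thesis
    by simp
qed

lemma continuous_on_res: "continuous_on (cball 0 1) res"
  unfolding continuous_on_def
proof
  fix m :: complex
  assume m: "m \<in> cball 0 1"
  define K where "K = norm x * norm (res m)"
  have "0 \<le> K"
    by (simp add: K_def)
  have "eventually (\<lambda>l. norm (res l - res m) \<le> cmod (l - m) * (2 * K * norm (res m)))
      (at m within cball 0 1)"
    unfolding eventually_at
  proof (intro exI[of _ "1 / (2 * (K + 1))"] conjI ballI impI)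
    fix l
    assume l: "l \<in> cball 0 1" "l \<noteq> m \<and> dist l m < 1 / (2 * (K + 1))"
    then have "cmod (l - m) * (2 * (K + 1)) < 1"
      using \<open>0 \<le> K\<close> by (simp add: dist_norm field_simps)
    moreover have "cmod (l - m) * (2 * (K + 1)) = 2 * (cmod (l - m) * K) + 2 * cmod (l - m)"
      by (simp add: algebra_simps)
    ultimately have "cmod (l - m) * K \<le> 1/2"
      using norm_ge_zero[of "l - m"] by linarith
    then have "norm (res l) \<le> 2 * norm (res m)"
      using l m by (intro norm_res_le_twice) (auto simp: K_def)
    then have "norm (res l) * (norm x * norm (res m)) \<le> 2 * norm (res m) * (norm x * norm (res m))"
      by (rule mult_right_mono) simp
    then have "cmod (l - m) * (norm (res l) * norm x * norm (res m)) \<le> cmod (l - m) * (2 * K * norm (res m))"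
      by (intro mult_left_mono) (simp_all add: K_def ac_simps)
    moreover have "norm (res l - res m) \<le> cmod (l - m) * (norm (res l) * norm x * norm (res m))"
      using l m by (intro norm_res_diff_le) auto
    ultimately show "norm (res l - res m) \<le> cmod (l - m) * (2 * K * norm (res m))"
      by linarith
  qed (use \<open>0 \<le> K\<close> in simp)
  moreover have "((\<lambda>l. cmod (l - m) * (2 * K * norm (res m))) \<longlongrightarrow> 0) (at m within cball 0 1)"
    by (intro tendsto_eq_intros) auto
  ultimately have "((\<lambda>l. res l - res m) \<longlongrightarrow> 0) (at m within cball 0 1)"
    by (rule Lim_null_comparison)
  then show "(res \<longlongrightarrow> res m) (at m within cball 0 1)"
    by (rule LIM_zero_cancel)
qed

lemma res_bounded:
  obtains M where "\<And>l. cmod l \<le> 1 \<Longrightarrow> norm (res l) \<le> M"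
proof -
  obtain M where "\<forall>l\<in>cball 0 1. norm (res l) \<le> M"
    using compact_imp_bounded[OF compact_continuous_image[OF continuous_on_res compact_cball]]
    by (auto simp: bounded_iff)
  then show ?thesis
    by (intro that[of M]) (simp add: mem_cball_0)
qed

text \<open>\<open>root_mean_res k l\<close> is the mean of \<open>res (\<omega> * l)\<close> over the \<open>2^k\<close>-th roots of
  unity \<open>\<omega>\<close>; it inverts \<open>1 - l^2^k x^2^k\<close> while staying uniformly Lipschitz in \<open>l\<close>.\<close>

primrec root_mean_res :: "nat \<Rightarrow> complex \<Rightarrow> 'a" where
  "root_mean_res 0 l = res l"
| "root_mean_res (Suc k) l =
     scaleR (1/2) (root_mean_res k l + root_mean_res k (cis (pi / 2 ^ k) * l))"

lemma root_mean_res_inverse: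
  assumes "cmod l \<le> 1"
  shows "root_mean_res k l * (1 - scaleC (l ^ 2 ^ k) (x ^ 2 ^ k)) = 1 \<and>
         (1 - scaleC (l ^ 2 ^ k) (x ^ 2 ^ k)) * root_mean_res k l = 1"
  using assms
proof (induction k arbitrary: l)
  case 0
  then show ?case
    using res_cancel by simp
next
  case (Suc k)
  define \<omega> where "\<omega> = cis (pi / 2 ^ k)"
  define u where "u = scaleC (l ^ 2 ^ k) (x ^ 2 ^ k)"
  have "\<omega> ^ 2 ^ k = -1"
    unfolding \<omega>_def Complex.DeMoivre by simp
  then have "scaleC ((\<omega> * l) ^ 2 ^ k) (x ^ 2 ^ k) = - u"
    by (simp add: u_def power_mult_distrib scaleC_minus_left)
  moreover have "cmod (\<omega> * l) \<le> 1"
    using Suc.prems by (simp add: \<omega>_def norm_mult)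
  ultimately have rotated: "root_mean_res k (\<omega> * l) * (1 + u) = 1" "(1 + u) * root_mean_res k (\<omega> * l) = 1"
    using Suc.IH[of "\<omega> * l"] by simp_all
  have unrotated: "root_mean_res k l * (1 - u) = 1" "(1 - u) * root_mean_res k l = 1"
    using Suc.IH[OF Suc.prems] by (simp_all add: u_def)
  have "(2::nat) ^ Suc k = 2 ^ k + 2 ^ k"
    by simp
  then have "scaleC (l ^ 2 ^ Suc k) (x ^ 2 ^ Suc k) = u * u"
    unfolding u_def by (simp only: power_add) simp
  moreover have "root_mean_res (Suc k) l = scaleR (1/2) (root_mean_res k l + root_mean_res k (\<omega> * l))"
    by (simp add: \<omega>_def)
  ultimately show ?case
    using mean_of_inverses[OF unrotated rotated] by simp
qed

lemma root_mean_res_lipschitz: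
  assumes M: "\<And>l. cmod l \<le> 1 \<Longrightarrow> norm (res l) \<le> M"
  shows "cmod l \<le> 1 \<Longrightarrow> cmod m \<le> 1 \<Longrightarrow>
    norm (root_mean_res k l - root_mean_res k m) \<le> M * M * norm x * cmod (l - m)"
proof (induction k arbitrary: l m)
  case 0
  have "norm (res 0) \<le> M"
    by (rule M) simp
  then have "0 \<le> M"
    by (rule order_trans[OF norm_ge_zero])
  then have "norm (res l) * norm x * norm (res m) \<le> M * norm x * M"
    using M[OF "0.prems"(1)] M[OF "0.prems"(2)] by (intro mult_mono) auto
  then have "cmod (l - m) * (norm (res l) * norm x * norm (res m)) \<le> cmod (l - m) * (M * norm x * M)"
    by (rule mult_left_mono) simp
  also have "\<dots> = M * M * norm x * cmod (l - m)"
    by (simp only: ac_simps)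
  finally have "norm (res l - res m) \<le> M * M * norm x * cmod (l - m)"
    using norm_res_diff_le[OF "0.prems"] by linarith
  then show ?case
    by simp
next
  case (Suc k)
  define \<omega> where "\<omega> = cis (pi / 2 ^ k)"
  have "cmod (\<omega> * l) \<le> 1" "cmod (\<omega> * m) \<le> 1" "cmod (\<omega> * l - \<omega> * m) = cmod (l - m)"
    using Suc.prems by (simp_all add: \<omega>_def norm_mult flip: right_diff_distrib)
  then have "norm (root_mean_res k (\<omega> * l) - root_mean_res k (\<omega> * m)) \<le> M * M * norm x * cmod (l - m)"
    using Suc.IH[of "\<omega> * l" "\<omega> * m"] by simp
  moreover have "norm (root_mean_res k l - root_mean_res k m) \<le> M * M * norm x * cmod (l - m)"
    using Suc.IH[OF Suc.prems] .
  moreover have "root_mean_res (Suc k) l - root_mean_res (Suc k) m =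
      scaleR (1/2) ((root_mean_res k l + root_mean_res k (\<omega> * l)) -
                    (root_mean_res k m + root_mean_res k (\<omega> * m)))"
    by (simp add: \<omega>_def scaleR_diff_right)
  moreover have "(root_mean_res k l + root_mean_res k (\<omega> * l)) -
      (root_mean_res k m + root_mean_res k (\<omega> * m)) =
      (root_mean_res k l - root_mean_res k m) + (root_mean_res k (\<omega> * l) - root_mean_res k (\<omega> * m))"
    by (simp add: algebra_simps)
  ultimately show ?case
    using norm_triangle_ineq[of "root_mean_res k l - root_mean_res k m"
        "root_mean_res k (\<omega> * l) - root_mean_res k (\<omega> * m)"]
    by simp
qed

lemma eventually_norm_power_le_three:
  assumes M: "\<And>l. cmod l \<le> 1 \<Longrightarrow> norm (res l) \<le> M"
    and t: "0 \<le> t0" "t0 \<le> t1" "t1 \<le> 1" and close: "M * M * norm x * (t1 - t0) \<le> 1/4"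
    and lim: "(\<lambda>k. t0 ^ 2 ^ k * norm (x ^ 2 ^ k)) \<longlonglongrightarrow> 0"
  shows "eventually (\<lambda>k. t1 ^ 2 ^ k * norm (x ^ 2 ^ k) \<le> 3) sequentially"
proof -
  have "eventually (\<lambda>k. t0 ^ 2 ^ k * norm (x ^ 2 ^ k) < 1/8) sequentially"
    using lim by (rule order_tendstoD) simp
  then show ?thesis
  proof eventually_elim
    case (elim k)
    define v where "v t = scaleR (t ^ 2 ^ k) (x ^ 2 ^ k)" for t
    have inverse: "root_mean_res k (complex_of_real t) * (1 - v t) = 1"
      "(1 - v t) * root_mean_res k (complex_of_real t) = 1" if "0 \<le> t" "t \<le> 1" for t
      using root_mean_res_inverse[of "complex_of_real t" k] that
      by (simp_all add: v_def scaleC_of_real flip: of_real_power)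
    have "norm (v t0) \<le> 1/8"
      using elim t by (simp add: v_def)
    then have "norm (root_mean_res k t0 - 1) \<le> 1/4"
      using norm_inverse_minus_one_le[OF inverse(2)[of t0]] t by simp
    moreover have "norm (root_mean_res k t1 - root_mean_res k t0) \<le> 1/4"
      using root_mean_res_lipschitz[OF M, of "complex_of_real t1" "complex_of_real t0" k] t close
      by (simp flip: of_real_diff)
    ultimately have "norm (root_mean_res k t1 - 1) \<le> 1/2"
      using norm_triangle_ineq[of "root_mean_res k t1 - root_mean_res k t0" "root_mean_res k t0 - 1"]
      by simp
    then have "norm (v t1) \<le> 3"
      using norm_le_three_if_inverse_near_one[OF inverse(1)[of t1]] t by simp
    then show ?case
      using t by (simp add: v_def)
  qed
qed


lemma norm_le_one_if_selfadjoint: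
  assumes selfadjoint: "cstar x = x"
  shows "norm x \<le> 1"
proof (rule ccontr)
  assume "\<not> norm x \<le> 1"
  define q where "q = norm x"
  have q: "1 < q"
    using \<open>\<not> norm x \<le> 1\<close> by (simp add: q_def)
  have norm_power: "norm (x ^ 2 ^ k) = q ^ 2 ^ k" for k
    using norm_selfadjoint_power_two_pow[OF selfadjoint] by (simp add: q_def)
  obtain M where M: "\<And>l. cmod l \<le> 1 \<Longrightarrow> norm (res l) \<le> M"
    using res_bounded by blast
  define C where "C = M * M * norm x"
  have "0 \<le> C"
    using M[of 0] norm_ge_zero[of "res 0"] by (simp add: C_def)
  define \<delta> where "\<delta> = 1 / (8 * (C + 1))"
  have \<delta>: "0 < \<delta>" "C * (2 * \<delta>) \<le> 1/4"
    using \<open>0 \<le> C\<close> by (simp_all add: \<delta>_def field_simps)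
  define s where "s = 1 / q"
  have s: "0 < s" "s < 1" "s * q = 1"
    using q by (simp_all add: s_def)
  define t0 where "t0 = max 0 (s - \<delta>)"
  define t1 where "t1 = min 1 (s + \<delta>)"
  have t: "0 \<le> t0" "t0 \<le> t1" "t1 \<le> 1" "t0 < s" "s < t1" "t1 - t0 \<le> 2 * \<delta>"
    using s \<delta>(1) by (simp_all add: t0_def t1_def)
  have "t0 * q < s * q" "s * q < t1 * q"
    using t(4,5) q by (intro mult_strict_right_mono; simp)+
  then have "t0 * q < 1" "1 < t1 * q"
    using s(3) by simp_all
  have "C * (t1 - t0) \<le> C * (2 * \<delta>)"
    using \<open>0 \<le> C\<close> t(6) by (intro mult_left_mono)
  then have "C * (t1 - t0) \<le> 1/4"
    using \<delta>(2) by linarith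
  moreover have "(\<lambda>k. t0 ^ 2 ^ k * norm (x ^ 2 ^ k)) \<longlonglongrightarrow> 0"
    using power_two_pow_tendsto_zero[of "t0 * q"] t(1) \<open>t0 * q < 1\<close> q
    by (simp add: norm_power power_mult_distrib)
  ultimately have "eventually (\<lambda>k. (t1 * q) ^ 2 ^ k \<le> 3) sequentially"
    using eventually_norm_power_le_three[OF M t(1-3)] by (simp add: C_def norm_power power_mult_distrib)
  moreover have "eventually (\<lambda>k. 3 < (t1 * q) ^ 2 ^ k) sequentially"
    using eventually_less_power_two_pow \<open>1 < t1 * q\<close> by blast
  ultimately have "eventually (\<lambda>k. False) sequentially"
    by eventually_elim simp
  then show False
    by simp
qed
end

lemma unit_disc_resolventI:
  assumes "\<And>z. z \<in> cstar_spectrum x \<Longrightarrow> cmod z < 1"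
  shows "unit_disc_resolvent x"
proof
  fix l :: complex
  assume l: "cmod l \<le> 1"
  show "cstar_invertible (1 - scaleC l x)"
  proof (cases "l = 0")
    case False
    have "1 \<le> cmod (inverse l)"
      using l False by (simp add: norm_divide field_simps)
    then have "inverse l \<notin> cstar_spectrum x"
      using assms by force
    moreover have "1 - scaleC l x = scaleC (- l) (x - scaleC (inverse l) 1)"
      using False by (simp add: scaleC_diff_right scaleC_minus_left)
    ultimately show ?thesis
      using False by (simp add: mem_cstar_spectrum cstar_invertible_scaleC)
  qed simp
qed

theorem norm_selfadjoint_le_spectral_bound:
  fixes h :: "'a::cstar_algebra"
  assumes selfadjoint: "cstar h = h" and "0 \<le> r"
    and spectrum: "\<And>z. z \<in> cstar_spectrum h \<Longrightarrow> cmod z \<le> r"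
  shows "norm h \<le> r"
proof (rule ccontr)
  assume "\<not> norm h \<le> r"
  define \<rho> where "\<rho> = (r + norm h) / 2"
  have \<rho>: "r < \<rho>" "\<rho> < norm h"
    using \<open>\<not> norm h \<le> r\<close> by (auto simp: \<rho>_def)
  define x where "x = scaleR (1 / \<rho>) h"
  interpret unit_disc_resolvent x
  proof (rule unit_disc_resolventI)
    fix z
    assume "z \<in> cstar_spectrum x"
    moreover have "x = scaleC (complex_of_real (1 / \<rho>)) h"
      by (simp only: x_def scaleC_of_real)
    ultimately have "z * \<rho> \<in> cstar_spectrum h"
      using \<rho> \<open>0 \<le> r\<close> cstar_spectrum_scaleC[of "complex_of_real (1 / \<rho>)" z h] by simp
    then have "cmod z * \<rho> \<le> r"
      using spectrum \<rho> \<open>0 \<le> r\<close> by (fastforce simp: norm_mult)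
    then have "cmod z * \<rho> < 1 * \<rho>"
      using \<rho> by linarith
    then show "cmod z < 1"
      using \<rho> \<open>0 \<le> r\<close> by (simp add: mult_less_cancel_right)
  qed
  have "norm x \<le> 1"
    by (rule norm_le_one_if_selfadjoint) (simp add: x_def selfadjoint)
  moreover have "1 < norm x"
    using \<rho> \<open>0 \<le> r\<close> by (simp add: x_def field_simps)
  ultimately show False
    by simp
qed

section \<open>Positive elements\<close>

lemma cstar_positive_iff:
  "cstar_positive a \<longleftrightarrow> cstar a = a \<and> (\<forall>z\<in>cstar_spectrum a. Im z = 0 \<and> 0 \<le> Re z)"
proof -
  have "z \<in> complex_of_real ` {0..} \<longleftrightarrow> Im z = 0 \<and> 0 \<le> Re z" for z
    by (auto simp: image_iff complex_eq_iff intro!: bexI[of _ "Re z"])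
  then show ?thesis
    unfolding cstar_positive_def by auto
qed

lemma cstar_positiveI:
  assumes "cstar a = a" and "\<And>z. z \<in> cstar_spectrum a \<Longrightarrow> Im z = 0 \<and> 0 \<le> Re z"
  shows "cstar_positive a"
  using assms by (simp add: cstar_positive_iff)

lemma cstar_positiveD:
  assumes "cstar_positive a"
  shows "cstar a = a" "z \<in> cstar_spectrum a \<Longrightarrow> Im z = 0"
    "z \<in> cstar_spectrum a \<Longrightarrow> 0 \<le> Re z"
  using assms by (auto simp: cstar_positive_iff)

lemma cstar_spectrum_const_minus:
  "z \<in> cstar_spectrum (scaleC c 1 - a) \<longleftrightarrow> c - z \<in> cstar_spectrum (a::'a::cstar_algebra)"
proof -
  have "scaleC c 1 - a - scaleC z 1 = - (a - scaleC (c - z) 1)"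
    by (simp add: scaleC_diff_left)
  then show ?thesis
    unfolding mem_cstar_spectrum by (simp only: cstar_invertible_minus_iff)
qed

lemma norm_diff_le_if_cstar_positive:
  assumes "cstar_positive (a::'a::cstar_algebra)" and "norm a \<le> t"
  shows "norm (scaleR t 1 - a) \<le> t"
proof (rule norm_selfadjoint_le_spectral_bound)
  show "cstar (scaleR t 1 - a) = scaleR t 1 - a"
    using cstar_positiveD(1)[OF assms(1)] by simp
  show "0 \<le> t"
    using assms(2) norm_ge_zero order_trans by blast
  fix z
  assume "z \<in> cstar_spectrum (scaleR t 1 - a)"
  then have m: "complex_of_real t - z \<in> cstar_spectrum a"
    by (simp add: cstar_spectrum_const_minus flip: scaleC_of_real)
  have "Re z \<le> t"
    using cstar_positiveD(3)[OF assms(1) m] by simp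
  moreover have "t - Re z \<le> t"
    using cstar_spectrum_norm_le[OF m] abs_Re_le_cmod[of "complex_of_real t - z"] assms(2) by simp
  moreover have "Im z = 0"
    using cstar_positiveD(2)[OF assms(1) m] by simp
  ultimately show "cmod z \<le> t"
    by (simp add: cmod_eq_Re)
qed

lemma cstar_positive_if_norm_diff_le:
  assumes "cstar a = (a::'a::cstar_algebra)" and "norm (scaleR t 1 - a) \<le> t"
  shows "cstar_positive a"
proof (rule cstar_positiveI[OF assms(1)])
  fix z
  assume "z \<in> cstar_spectrum a"
  then have "complex_of_real t - z \<in> cstar_spectrum (scaleR t 1 - a)"
    by (simp add: cstar_spectrum_const_minus flip: scaleC_of_real)
  moreover have "cstar (scaleR t 1 - a) = scaleR t 1 - a"
    using assms(1) by simp
  ultimately have "Im (complex_of_real t - z) = 0" "cmod (complex_of_real t - z) \<le> t"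
    using cstar_spectrum_selfadjoint_real cstar_spectrum_norm_le[of _ "scaleR t 1 - a"] assms(2)
    by (blast, fastforce)
  moreover have "\<bar>Re (complex_of_real t - z)\<bar> \<le> cmod (complex_of_real t - z)"
    by (rule abs_Re_le_cmod)
  ultimately show "Im z = 0 \<and> 0 \<le> Re z"
    by auto
qed

lemma cstar_positive_add:
  assumes "cstar_positive (a::'a::cstar_algebra)" "cstar_positive b"
  shows "cstar_positive (a + b)"
proof (rule cstar_positive_if_norm_diff_le)
  show "cstar (a + b) = a + b"
    using cstar_positiveD(1)[OF assms(1)] cstar_positiveD(1)[OF assms(2)] by simp
  have "scaleR (norm a + norm b) 1 - (a + b) = (scaleR (norm a) 1 - a) + (scaleR (norm b) 1 - b)"
    by (simp add: algebra_simps scaleR_add_left)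
  also have "norm \<dots> \<le> norm (scaleR (norm a) 1 - a) + norm (scaleR (norm b) 1 - b)"
    by (rule norm_triangle_ineq)
  also have "\<dots> \<le> norm a + norm b"
    using norm_diff_le_if_cstar_positive[OF assms(1) order_refl]
      norm_diff_le_if_cstar_positive[OF assms(2) order_refl]
    by (rule add_mono)
  finally show "norm (scaleR (norm a + norm b) 1 - (a + b)) \<le> norm a + norm b" .
qed

lemma cstar_positive_scaleR:
  assumes "cstar_positive (a::'a::cstar_algebra)" "0 \<le> c"
  shows "cstar_positive (scaleR c a)"
proof (rule cstar_positive_if_norm_diff_le)
  show "cstar (scaleR c a) = scaleR c a"
    using cstar_positiveD(1)[OF assms(1)] by simp
  have "scaleR (c * norm a) 1 - scaleR c a = scaleR c (scaleR (norm a) 1 - a)"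
    by (simp add: scaleR_diff_right)
  then have "norm (scaleR (c * norm a) 1 - scaleR c a) = c * norm (scaleR (norm a) 1 - a)"
    using assms(2) by simp
  also have "\<dots> \<le> c * norm a"
    using norm_diff_le_if_cstar_positive[OF assms(1)] assms(2) by (simp add: mult_left_mono)
  finally show "norm (scaleR (c * norm a) 1 - scaleR c a) \<le> c * norm a" .
qed

lemma cstar_positive_const: "0 \<le> c \<Longrightarrow> cstar_positive (scaleR c (1::'a::cstar_algebra))"
  by (rule cstar_positive_if_norm_diff_le[where t = c]) simp_all

lemma cstar_positive_add_norm:
  assumes "cstar h = (h::'a::cstar_algebra)"
  shows "cstar_positive (h + scaleR (norm h) 1)"
proof (rule cstar_positive_if_norm_diff_le[where t = "2 * norm h"])
  show "cstar (h + scaleR (norm h) 1) = h + scaleR (norm h) 1"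
    using assms by simp
  have "scaleR (2 * norm h) (1::'a) = scaleR (norm h) 1 + scaleR (norm h) 1"
    by (simp only: mult_2 scaleR_add_left)
  then have eq: "scaleR (2 * norm h) 1 - (h + scaleR (norm h) 1) = scaleR (norm h) 1 - h"
    by simp
  show "norm (scaleR (2 * norm h) 1 - (h + scaleR (norm h) 1)) \<le> 2 * norm h"
    unfolding eq using norm_triangle_ineq4[of "scaleR (norm h) 1" h] by simp
qed

lemma cstar_positive_antisym:
  assumes "cstar_positive (a::'a::cstar_algebra)" "cstar_positive (- a)"
  shows "a = 0"
proof -
  have "norm a \<le> 0"
  proof (rule norm_selfadjoint_le_spectral_bound[OF cstar_positiveD(1)[OF assms(1)]])
    fix z
    assume z: "z \<in> cstar_spectrum a"
    then have "- z \<in> cstar_spectrum (- a)"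
      by (simp add: cstar_spectrum_uminus)
    then have "z = 0"
      using cstar_positiveD(3)[OF assms(2)] cstar_positiveD(2,3)[OF assms(1) z]
      by (fastforce simp: complex_eq_iff)
    then show "cmod z \<le> 0"
      by simp
  qed simp
  then show ?thesis
    by simp
qed

lemma cstar_positive_square:
  assumes "cstar h = (h::'a::cstar_algebra)"
  shows "cstar_positive (h * h)"
proof (rule cstar_positiveI)
  show "cstar (h * h) = h * h"
    using assms by (simp add: cstar_mult)
  fix z
  assume "z \<in> cstar_spectrum (h * h)"
  then have "z \<in> cstar_spectrum (h * h + scaleC 0 h)"
    by simp
  then obtain m where "m \<in> cstar_spectrum h" "z = m * m + 0 * m"
    by (rule cstar_spectrum_quadratic)
  then show "Im z = 0 \<and> 0 \<le> Re z"
    using cstar_spectrum_selfadjoint_real[OF assms] by simp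
qed

lemma cstar_positive_diff_square:
  assumes "cstar_positive (a::'a::cstar_algebra)" "norm a \<le> 1"
  shows "cstar_positive (a - a * a)"
proof (rule cstar_positiveI)
  show "cstar (a - a * a) = a - a * a"
    using cstar_positiveD(1)[OF assms(1)] by (simp add: cstar_mult)
  fix z
  assume "z \<in> cstar_spectrum (a - a * a)"
  then have "- z \<in> cstar_spectrum (a * a + scaleC (-1) a)"
    using cstar_spectrum_uminus[of z "a * a + scaleC (-1) a"] by (simp add: scaleC_minus_left)
  then obtain m where m: "m \<in> cstar_spectrum a" "- z = m * m + (-1) * m"
    by (rule cstar_spectrum_quadratic)
  have "Im m = 0" "0 \<le> Re m" "Re m \<le> 1"
    using cstar_positiveD(2,3)[OF assms(1) m(1)] cstar_spectrum_norm_le[OF m(1)] abs_Re_le_cmod[of m] assms(2)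
    by auto
  moreover have "z = m * (1 - m)"
    using m(2) by (simp add: algebra_simps)
  ultimately show "Im z = 0 \<and> 0 \<le> Re z"
    by simp
qed

section \<open>Projections and compressions\<close>

definition cstar_projection :: "'a::cstar_algebra \<Rightarrow> bool" where
  "cstar_projection p \<longleftrightarrow> cstar p = p \<and> p * p = p"

lemma cstar_projection_complement: "cstar_projection p \<Longrightarrow> cstar_projection (1 - p)"
  unfolding cstar_projection_def by (simp add: algebra_simps)

lemma norm_cstar_projection_le:
  assumes "cstar_projection p"
  shows "norm p \<le> 1"
proof -
  have "(norm p)\<^sup>2 = norm p"
    using cstar_identity[of p] assms by (simp add: cstar_projection_def)
  then have "norm p * (norm p - 1) = 0"
    by (simp add: power2_eq_square algebra_simps)
  then show ?thesis
    by auto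
qed

lemma norm_selfadjoint_unitary:
  assumes "cstar u = (u::'a::cstar_algebra)" "u * u = 1"
  shows "norm u = 1"
proof -
  have "(norm u)\<^sup>2 = 1"
    using cstar_identity[of u] assms by simp
  then show ?thesis
    using norm_ge_zero[of u] by (auto simp: power2_eq_1_iff)
qed

lemma cstar_positive_conj_symmetry:
  assumes "cstar_positive a" "cstar u = u" "u * u = 1"
  shows "cstar_positive (u * a * u)"
proof (rule cstar_positive_if_norm_diff_le[where t = "norm a"])
  show "cstar (u * a * u) = u * a * u"
    using assms(2) cstar_positiveD(1)[OF assms(1)] by (simp add: cstar_mult mult.assoc)
  have "scaleR (norm a) 1 - u * a * u = u * (scaleR (norm a) 1 - a) * u"
    using assms(3) by (simp add: algebra_simps)
  then show "norm (scaleR (norm a) 1 - u * a * u) \<le> norm a"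
    using norm_mult_mult_le[of u "scaleR (norm a) 1 - a" u] norm_selfadjoint_unitary[OF assms(2,3)]
      norm_diff_le_if_cstar_positive[OF assms(1) order_refl]
    by simp
qed

lemma cstar_positive_pinching:
  assumes "cstar_projection p" "cstar_positive a"
  shows "cstar_positive (p * a * p + (1 - p) * a * (1 - p))"
proof -
  define u where "u = p - (1 - p)"
  have u: "cstar u = u" "u * u = 1"
    using assms(1) by (auto simp: u_def cstar_projection_def algebra_simps)
  have "a + u * a * u = scaleR 2 (p * a * p + (1 - p) * a * (1 - p))"
    by (simp add: u_def algebra_simps scaleR_2)
  then have "p * a * p + (1 - p) * a * (1 - p) = scaleR (1/2) (a + u * a * u)"
    by simp
  then show ?thesis
    using cstar_positive_scaleR[OF cstar_positive_add[OF assms(2) cstar_positive_conj_symmetry[OF assms(2) u]]]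
    by simp
qed

text \<open>An inverse \<open>c\<close> of \<open>y - w p\<close> in the corner \<open>p A p\<close> extends to the inverse
  \<open>c - (1 - p) / w\<close> of \<open>y - w\<close>.\<close>

lemma cstar_invertible_of_corner_inverse:
  fixes y c p :: "'a::cstar_algebra"
  assumes "w \<noteq> 0" and y: "p * y = y" "y * p = y" and c: "p * c = c" "c * p = c"
    and inverse: "(y - scaleC w p) * c = p" "c * (y - scaleC w p) = p"
  shows "cstar_invertible (y - scaleC w 1)"
proof (rule cstar_invertibleI)
  have yc: "y * c = p + scaleC w c" and cy: "c * y = p + scaleC w c"
    using inverse c by (simp_all add: algebra_simps)
  show "(y - scaleC w 1) * (c - scaleC (inverse w) (1 - p)) = 1"
    using \<open>w \<noteq> 0\<close> y by (simp add: algebra_simps scaleC_diff_right scaleC_add_right yc)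
  show "(c - scaleC (inverse w) (1 - p)) * (y - scaleC w 1) = 1"
    using \<open>w \<noteq> 0\<close> y by (simp add: algebra_simps scaleC_diff_right scaleC_add_right cy)
qed

lemma compress_cstar_inverse:
  assumes p: "p * p = p" and comm: "x * p = p * x" and "cstar_invertible (x::'a::cstar_algebra)"
  shows "(p * x * p) * (p * cstar_inverse x * p) = p" "(p * cstar_inverse x * p) * (p * x * p) = p"
proof -
  note inverse = cstar_inverse_cancel[OF \<open>cstar_invertible x\<close>]
  have pp: "p * (p * y) = p * y" for y
    using p by (simp flip: mult.assoc)
  have inverse_comm: "cstar_inverse x * p = p * cstar_inverse x"
  proof -
    have "cstar_inverse x * p = cstar_inverse x * (p * x) * cstar_inverse x"
      using inverse by (simp add: mult.assoc)
    also have "\<dots> = cstar_inverse x * (x * p) * cstar_inverse x"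
      using comm by simp
    also have "\<dots> = p * cstar_inverse x"
      using inverse by (simp flip: mult.assoc)
    finally show ?thesis .
  qed
  have "(p * x * p) * (p * cstar_inverse x * p) = p * x * (cstar_inverse x * p) * p"
    using p pp inverse_comm by (simp add: mult.assoc)
  also have "\<dots> = p * (x * cstar_inverse x) * (p * p)"
    by (simp only: mult.assoc)
  also have "\<dots> = p"
    using p inverse by simp
  finally show "(p * x * p) * (p * cstar_inverse x * p) = p" .
  have "(p * cstar_inverse x * p) * (p * x * p) = p * cstar_inverse x * (x * p) * p"
    using p pp comm by (simp add: mult.assoc)
  also have "\<dots> = p * (cstar_inverse x * x) * (p * p)"
    by (simp only: mult.assoc)
  also have "\<dots> = p"
    using p inverse by simp
  finally show "(p * cstar_inverse x * p) * (p * x * p) = p" .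
qed

lemma cstar_spectrum_compress:
  assumes p: "p * p = p" and comm: "x * p = p * x"
    and "z \<noteq> 0" and z: "z \<in> cstar_spectrum (p * x * p)"
  shows "z \<in> cstar_spectrum (x::'a::cstar_algebra)"
proof (rule ccontr)
  assume "z \<notin> cstar_spectrum x"
  then have invertible: "cstar_invertible (x - scaleC z 1)"
    by (simp add: mem_cstar_spectrum)
  have pp: "p * (p * y) = p * y" for y
    using p by (simp flip: mult.assoc)
  have "(x - scaleC z 1) * p = p * (x - scaleC z 1)"
    using comm by (simp add: algebra_simps)
  note corner = compress_cstar_inverse[OF p this invertible]
  have "p * (x - scaleC z 1) * p = p * x * p - scaleC z p"
    using p by (simp add: algebra_simps)
  have "cstar_invertible (p * x * p - scaleC z 1)"
  proof (rule cstar_invertible_of_corner_inverse[OF \<open>z \<noteq> 0\<close>])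
    show "p * (p * x * p) = p * x * p" "p * x * p * p = p * x * p"
      "p * (p * cstar_inverse (x - scaleC z 1) * p) = p * cstar_inverse (x - scaleC z 1) * p"
      "p * cstar_inverse (x - scaleC z 1) * p * p = p * cstar_inverse (x - scaleC z 1) * p"
      using p pp by (simp_all add: mult.assoc)
    show "(p * x * p - scaleC z p) * (p * cstar_inverse (x - scaleC z 1) * p) = p"
      "p * cstar_inverse (x - scaleC z 1) * p * (p * x * p - scaleC z p) = p"
      using corner \<open>p * (x - scaleC z 1) * p = p * x * p - scaleC z p\<close> by simp_all
  qed
  then show False
    using z by (simp add: mem_cstar_spectrum)
qed

lemma cstar_positive_compress:
  assumes p: "cstar_projection p" and a: "cstar_positive a"
  shows "cstar_positive (p * a * p)"
proof (rule cstar_positiveI)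
  have p': "cstar p = p" "p * p = p" "p * (p * y) = p * y" for y
    using p by (simp_all add: cstar_projection_def flip: mult.assoc)
  show "cstar (p * a * p) = p * a * p"
    using cstar_positiveD(1)[OF a] p' by (simp add: cstar_mult mult.assoc)
  fix z
  assume z: "z \<in> cstar_spectrum (p * a * p)"
  define b where "b = p * a * p + (1 - p) * a * (1 - p)"
  have b: "cstar_positive b"
    unfolding b_def using p a by (rule cstar_positive_pinching)
  have "b * p = p * b" "p * b * p = p * a * p"
    using p' by (simp_all add: b_def algebra_simps)
  show "Im z = 0 \<and> 0 \<le> Re z"
  proof (cases "z = 0")
    case False
    then have "z \<in> cstar_spectrum b"
      using cstar_spectrum_compress[OF p'(2) \<open>b * p = p * b\<close> False] z \<open>p * b * p = p * a * p\<close>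
      by simp
    then show ?thesis
      using cstar_positiveD(2,3)[OF b] by simp
  qed simp
qed

lemma mult_projection_eq_0_if_compress_eq_0:
  assumes q: "cstar_projection q" and a: "cstar_positive a" and "q * a * q = 0"
  shows "a * q = 0"
proof (cases "a = 0")
  case False
  define a' where "a' = scaleR (1 / norm a) a"
  have a': "cstar_positive a'" "norm a' \<le> 1" "cstar a' = a'" "q * a' * q = 0"
    using cstar_positive_scaleR[OF a] cstar_positiveD(1)[OF a] \<open>q * a * q = 0\<close> False
    by (simp_all add: a'_def)
  have q': "cstar q = q"
    using q by (simp add: cstar_projection_def)
  have square: "q * (a' * a') * q = cstar (a' * q) * (a' * q)"
    using a'(3) q' by (simp add: cstar_mult mult.assoc)
  have "cstar_positive (q * (a' - a' * a') * q)"
    using q cstar_positive_diff_square[OF a'(1,2)] by (rule cstar_positive_compress)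
  moreover have "q * (a' - a' * a') * q = - (q * (a' * a') * q)"
    using a'(4) by (simp add: algebra_simps)
  moreover have "cstar_positive (q * (a' * a') * q)"
    using q cstar_positive_square[OF a'(3)] by (rule cstar_positive_compress)
  ultimately have "cstar (a' * q) * (a' * q) = 0"
    using cstar_positive_antisym square by metis
  then have "a' * q = 0"
    using cstar_identity[of "a' * q"] by simp
  then show ?thesis
    using False by (simp add: a'_def)
qed simp

lemma compress_eq_if_cstar_positive_below:
  assumes p: "cstar_projection p" and b: "p * b = b" "b * p = b"
    and a: "cstar_positive a" "cstar_positive (b - a)"
  shows "p * a * p = a"
proof -
  define q where "q = 1 - p"
  have q: "cstar_projection q"
    using p by (simp add: q_def cstar_projection_complement)
  have "q * (b - a) * q = - (q * a * q)"
    using b by (simp add: q_def algebra_simps)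
  then have "q * a * q = 0"
    using cstar_positive_compress[OF q a(2)] cstar_positive_compress[OF q a(1)] cstar_positive_antisym
    by simp
  then have "a * q = 0"
    by (rule mult_projection_eq_0_if_compress_eq_0[OF q a(1)])
  moreover have "q * a = cstar (a * q)"
    using q cstar_positiveD(1)[OF a(1)] by (simp add: cstar_projection_def cstar_mult)
  ultimately have "a * p = a" "p * a = a"
    by (simp_all add: q_def algebra_simps)
  then show ?thesis
    by simp
qed

section \<open>Transfer operators\<close>

lemma clinear_map_simps:
  assumes "clinear_map T"
  shows "T (x + y) = T x + T y" "T (scaleC c x) = scaleC c (T x)" "T (- x) = - T x"
    "T (x - y) = T x - T y" "T 0 = 0" "T (scaleR r x) = scaleR r (T x)"
proof -
  show add: "T (x + y) = T x + T y" and scale: "T (scaleC c x) = scaleC c (T x)" for x y c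
    using assms unfolding clinear_map_def by auto
  show minus: "T (- x) = - T x" for x
    using scale[of "-1" x] by (simp add: scaleC_minus_left)
  show "T (x - y) = T x - T y"
    using add[of x "- y"] minus[of y] by simp
  show "T 0 = 0"
    using scale[of 0 0] by simp
  show "T (scaleR r x) = scaleR r (T x)"
    using scale[of "complex_of_real r" x] by (simp add: scaleC_of_real)
qed

lemma positive_clinear_map_cstar:
  assumes lin: "clinear_map T" and pos: "\<forall>a. cstar_positive a \<longrightarrow> cstar_positive (T a)"
  shows "T (cstar x) = cstar (T (x::'a::cstar_algebra))"
proof -
  have selfadjoint: "cstar (T h) = T h" if "cstar h = h" for h
  proof -
    have "T h = T (h + scaleR (norm h) 1) - T (scaleR (norm h) 1)"
      using clinear_map_simps[OF lin] by simp
    then show ?thesis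
      using cstar_positiveD(1)[OF pos[rule_format, OF cstar_positive_add_norm[OF that]]]
        cstar_positiveD(1)[OF pos[rule_format, OF cstar_positive_const[of "norm h"]]]
      by simp
  qed
  note decomposition = cstar_decomposition[of x]
  show ?thesis
    using selfadjoint[OF decomposition(1)] selfadjoint[OF decomposition(2)]
    by (subst (1 2) decomposition(3,4))
      (simp add: clinear_map_simps[OF lin] cstar_scaleC scaleC_minus_left)
qed

locale star_endo =
  fixes d :: "'a::cstar_algebra \<Rightarrow> 'a"
  assumes star_endomorphism: "star_endomorphism d"
begin

lemma clinear_map_d: "clinear_map d"
  using star_endomorphism by (simp add: star_endomorphism_def)

lemmas d_linear = clinear_map_simps[OF clinear_map_d]

lemma d_mult: "d (x * y) = d x * d y"
  using star_endomorphism by (simp add: star_endomorphism_def)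

lemma d_cstar: "d (cstar x) = cstar (d x)"
  using star_endomorphism by (simp add: star_endomorphism_def)

lemma d_one_mult [simp]: "d 1 * d x = d x"
  using d_mult[of 1 x] by simp

lemma d_mult_one [simp]: "d x * d 1 = d x"
  using d_mult[of x 1] by simp

lemma cstar_d_one [simp]: "cstar (d 1) = d 1"
  using d_cstar[of 1] by simp

lemma cstar_projection_d_one: "cstar_projection (d 1)"
  unfolding cstar_projection_def by simp

lemma transfer_operatorD:
  assumes "transfer_operator d T"
  shows "clinear_map T" "T (cstar x) = cstar (T x)" "T (d a * b) = a * T b" "T (b * d a) = T b * a"
    "T (d a) = a * T 1" "a * T 1 = T 1 * a" "cstar (T 1) = T 1" "T (d 1 * b * d 1) = T b"
proof -
  show lin: "clinear_map T" and left: "T (d a * b) = a * T b" for a b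
    using assms by (simp_all add: transfer_operator_def)
  show adjoint: "T (cstar x) = cstar (T x)" for x
    using assms lin by (intro positive_clinear_map_cstar) (simp_all add: transfer_operator_def)
  show right: "T (b * d a) = T b * a" for a b
  proof -
    have "T (b * d a) = cstar (T (cstar (b * d a)))"
      using adjoint[of "cstar (b * d a)"] by simp
    also have "cstar (b * d a) = d (cstar a) * cstar b"
      by (simp add: cstar_mult d_cstar)
    also have "cstar (T (d (cstar a) * cstar b)) = T b * a"
      using left adjoint by (simp add: cstar_mult)
    finally show ?thesis .
  qed
  show one: "T (d a) = a * T 1" for a
    using left[of a 1] by simp
  show "a * T 1 = T 1 * a"
    using one[of a] right[of 1 a] by simp
  show "cstar (T 1) = T 1"
    using adjoint[of 1] by simp
  show "T (d 1 * b * d 1) = T b"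
    using left right by simp
qed

lemma complete_imp_nondegenerate:
  "complete_transfer_operator d T \<Longrightarrow> nondegenerate_transfer_operator d T"
  by (simp add: complete_transfer_operator_def nondegenerate_transfer_operator_def)

lemma nondegenerate_imp_cond3i:
  assumes "nondegenerate_transfer_operator d T"
  shows "cond3i d (T 1)"
proof -
  have T: "transfer_operator d T" and "d (T 1) = d 1"
    using assms by (simp_all add: nondegenerate_transfer_operator_def)
  note facts = transfer_operatorD[OF T]
  define P where "P = T 1"
  have central: "P * a = a * P" for a
    using facts(6)[of a] by (simp add: P_def)
  have "P * P = T (d P)"
    using facts(5)[of P] by (simp add: P_def)
  also have "\<dots> = P"
    using \<open>d (T 1) = d 1\<close> facts(5)[of 1] by (simp add: P_def)
  finally have idempotent: "P * P = P" .
  have d_absorbs: "d (P * a) = d a" for a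
    using \<open>d (T 1) = d 1\<close> by (simp add: P_def d_mult)
  have "inj_on d (range (\<lambda>a. P * a))"
  proof (rule inj_onI)
    fix u v
    assume "u \<in> range (\<lambda>a. P * a)" "v \<in> range (\<lambda>a. P * a)" and "d u = d v"
    then obtain a b where u: "u = P * a" and v: "v = P * b"
      by auto
    have "d a = d b"
      using \<open>d u = d v\<close> d_absorbs u v by simp
    then have "a * P = b * P"
      using facts(5)[of a] facts(5)[of b] by (simp add: P_def)
    then show "u = v"
      using u v central[of a] central[of b] by simp
  qed
  moreover have "d ` range (\<lambda>a. P * a) = range d"
    by (simp add: image_image d_absorbs)
  moreover have "cstar P = P" "d P = d 1"
    using facts(7) \<open>d (T 1) = d 1\<close> by (simp_all add: P_def)
  ultimately have "cond3i d P"
    unfolding cond3i_def central_projection_def bij_betw_def using central idempotent by blast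
  then show ?thesis
    by (simp add: P_def)
qed

lemma cond3i_unique:
  assumes "cond3i d P" "cond3i d P'"
  shows "P = P'"
proof -
  have absorb: "Q * Q' = Q" if "cond3i d Q" "cond3i d Q'" for Q Q'
  proof -
    have "d Q = d 1" "d Q' = d 1" and inj: "inj_on d (range (\<lambda>a. Q * a))"
      using that by (auto simp: cond3i_def bij_betw_def)
    then have "d (Q * Q') = d (Q * 1)"
      by (simp add: d_mult)
    then have "Q * Q' = Q * 1"
      by (rule inj_onD[OF inj]) (rule rangeI)+
    then show ?thesis
      by simp
  qed
  have "P * P' = P' * P"
    using assms(1) by (simp add: cond3i_def central_projection_def)
  then show ?thesis
    using absorb[OF assms] absorb[OF assms(2,1)] by simp
qed

lemma corner_eq_fixed_points: "{d 1 * a * d 1 | a. True} = {x. d 1 * x * d 1 = x}"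
proof -
  have "d 1 * (d 1 * a * d 1) * d 1 = d 1 * a * d 1" for a
    using d_one_mult[of 1] by (simp add: mult.assoc flip: mult.assoc[of "d 1" "d 1"])
  then show ?thesis
    by auto metis
qed

lemma complete_range_eq_corner:
  assumes "complete_transfer_operator d T"
  shows "range d = {d 1 * a * d 1 | a. True}"
proof (intro equalityI subsetI)
  fix y
  assume "y \<in> range d"
  then have "y = d 1 * y * d 1"
    by auto
  then show "y \<in> {d 1 * a * d 1 | a. True}"
    by blast
next
  fix y
  assume "y \<in> {d 1 * a * d 1 | a. True}"
  then obtain a where "y = d 1 * a * d 1"
    by blast
  then show "y \<in> range d"
    using assms by (metis complete_transfer_operator_def rangeI)
qed

lemma complete_transfer_operator_eq:
  assumes complete: "complete_transfer_operator d T" and "cond3i d P"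
  shows "P = T 1" "T a = the_inv_into (range (\<lambda>x. P * x)) d (d 1 * a * d 1)"
proof -
  have T: "transfer_operator d T" and dT: "d (T a) = d 1 * a * d 1" for a
    using complete by (simp_all add: complete_transfer_operator_def)
  have "d P = d 1" and inj: "inj_on d (range (\<lambda>x. P * x))"
    using \<open>cond3i d P\<close> by (auto simp: cond3i_def bij_betw_def)
  have in_corner: "T a \<in> range (\<lambda>x. P * x)" for a
  proof -
    have "T a = T (d P * a)"
      using transfer_operatorD(3)[OF T, of 1 a] \<open>d P = d 1\<close> by simp
    also have "\<dots> = P * T a"
      by (rule transfer_operatorD(3)[OF T])
    finally show ?thesis
      by auto
  qed
  show "T a = the_inv_into (range (\<lambda>x. P * x)) d (d 1 * a * d 1)"
    using the_inv_into_f_f[OF inj in_corner] dT by simp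
  have "d (T 1) = d (P * 1)"
    using dT \<open>d P = d 1\<close> by simp
  then have "T 1 = P * 1"
    by (meson inj_onD[OF inj] in_corner rangeI)
  then show "P = T 1"
    by simp
qed

lemma complete_transfer_operator_unique:
  assumes "complete_transfer_operator d T" "complete_transfer_operator d T'"
  shows "T = T'"
proof
  fix a
  have "cond3i d (T 1)"
    using assms(1) by (intro nondegenerate_imp_cond3i complete_imp_nondegenerate)
  then show "T a = T' a"
    using complete_transfer_operator_eq(2)[OF assms(1)] complete_transfer_operator_eq(2)[OF assms(2)]
    by simp
qed

lemma nondegenerate_transfer_operator_unique:
  assumes complete: "complete_transfer_operator d T"
    and nondegenerate: "nondegenerate_transfer_operator d T'"
  shows "T' = T"
proof
  fix a
  have T: "transfer_operator d T" and dT: "d (T a) = d 1 * a * d 1"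
    using complete by (simp_all add: complete_transfer_operator_def)
  have T': "transfer_operator d T'"
    using nondegenerate by (simp add: nondegenerate_transfer_operator_def)
  have "cond3i d (T 1)"
    using complete by (intro nondegenerate_imp_cond3i complete_imp_nondegenerate)
  then have "T' 1 = T 1" "d (T 1) = d 1"
    using cond3i_unique nondegenerate_imp_cond3i[OF nondegenerate] by (auto simp: cond3i_def)
  have "T a = T (d (T 1) * a)"
    using transfer_operatorD(3)[OF T, of 1 a] \<open>d (T 1) = d 1\<close> by simp
  also have "\<dots> = T 1 * T a"
    by (rule transfer_operatorD(3)[OF T])
  finally have "T a = T a * T 1"
    using transfer_operatorD(6)[OF T, of "T a"] by simp
  have "T' a = T' (d 1 * a * d 1)"
    using transfer_operatorD(8)[OF T'] by simp
  also have "\<dots> = T a * T' 1"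
    using transfer_operatorD(5)[OF T', of "T a"] dT by simp
  also have "\<dots> = T a"
    using \<open>T' 1 = T 1\<close> \<open>T a = T a * T 1\<close> by simp
  finally show "T' a = T a" .
qed

lemma cstar_subalgebra_range_if_closed:
  assumes "closed (range d)"
  shows "cstar_subalgebra (range d)"
proof -
  have "0 \<in> range d" "d u + d v \<in> range d" "d u * d v \<in> range d" "scaleC c (d u) \<in> range d"
    "cstar (d u) \<in> range d" for u v c
    using rangeI[of d 0] rangeI[of d "u + v"] rangeI[of d "u * v"] rangeI[of d "scaleC c u"]
      rangeI[of d "cstar u"]
    by (simp_all add: d_linear d_mult d_cstar)
  then show ?thesis
    using assms by (auto simp: cstar_subalgebra_def)
qed

lemma complete_imp_hereditary:
  assumes "complete_transfer_operator d T"
  shows "hereditary_subalgebra (range d)"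
proof -
  have range: "range d = {x. d 1 * x * d 1 = x}"
    using complete_range_eq_corner[OF assms] corner_eq_fixed_points by simp
  have "closed (range d)"
    unfolding range by (intro closed_Collect_eq continuous_intros)
  moreover have "a \<in> range d" if "b \<in> range d" "cstar_positive a" "cstar_positive (b - a)" for a b
  proof -
    obtain u where "b = d u"
      using \<open>b \<in> range d\<close> by blast
    then have "d 1 * a * d 1 = a"
      using that by (intro compress_eq_if_cstar_positive_below[OF cstar_projection_d_one]) simp_all
    then show ?thesis
      unfolding range by simp
  qed
  ultimately show ?thesis
    unfolding hereditary_subalgebra_def using cstar_subalgebra_range_if_closed by blast
qed

text \<open>\<open>0 \<le> h + norm h * d 1 \<le> 2 * norm h * d 1\<close>, and the upper bound lies in the
  range of \<open>d\<close>.\<close>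

lemma hereditary_selfadjoint_corner_mem_range:
  assumes "hereditary_subalgebra (range d)" and h: "cstar h = h" "d 1 * h * d 1 = h"
  shows "h \<in> range d"
proof -
  have compress: "d 1 * (k + scaleR (norm h) 1) * d 1 = k + scaleR (norm h) (d 1)"
    if "d 1 * k * d 1 = k" for k
    using that d_one_mult[of 1] by (simp add: algebra_simps)
  have "cstar_positive (d 1 * (h + scaleR (norm h) 1) * d 1)"
    using cstar_projection_d_one cstar_positive_add_norm[OF h(1)] by (rule cstar_positive_compress)
  then have lower: "cstar_positive (h + scaleR (norm h) (d 1))"
    using compress[OF h(2)] by simp
  have "cstar_positive (d 1 * (- h + scaleR (norm h) 1) * d 1)"
    using cstar_projection_d_one cstar_positive_add_norm[of "- h"] h(1) by (simp add: cstar_positive_compress)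
  then have "cstar_positive (scaleR (norm h) (d 1) - h)"
    using compress[of "- h"] h(2) by (simp add: algebra_simps)
  moreover have "scaleR (2 * norm h) (d 1) = scaleR (norm h) (d 1) + scaleR (norm h) (d 1)"
    by (simp only: mult_2 scaleR_add_left)
  ultimately have upper: "cstar_positive (scaleR (2 * norm h) (d 1) - (h + scaleR (norm h) (d 1)))"
    by simp
  have "scaleR (2 * norm h) (d 1) \<in> range d"
    using rangeI[of d "scaleR (2 * norm h) 1"] by (simp add: d_linear)
  then have "h + scaleR (norm h) (d 1) \<in> range d"
    using assms(1) lower upper unfolding hereditary_subalgebra_def by blast
  then obtain u where "h + scaleR (norm h) (d 1) = d u"
    by blast
  then have "h = d (u - scaleR (norm h) 1)"
    by (simp add: d_linear algebra_simps)
  then show ?thesis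
    by simp
qed

lemma hereditary_corner_mem_range:
  assumes "hereditary_subalgebra (range d)"
  shows "d 1 * x * d 1 \<in> range d"
proof -
  define y where "y = d 1 * x * d 1"
  note decomposition = cstar_decomposition[of y]
  have "d 1 * y * d 1 = y" "d 1 * cstar y * d 1 = cstar y"
    using d_one_mult[of 1] by (simp_all add: y_def cstar_mult d_cstar mult.assoc flip: mult.assoc[of "d 1" "d 1"])
  then have "scaleR (1/2) (y + cstar y) \<in> range d" "scaleC (- \<i> / 2) (y - cstar y) \<in> range d"
    using decomposition(1,2)
    by (auto intro!: hereditary_selfadjoint_corner_mem_range[OF assms] simp: algebra_simps scaleC_diff_right)
  then obtain u v where "scaleR (1/2) (y + cstar y) = d u" "scaleC (- \<i> / 2) (y - cstar y) = d v"
    by (metis rangeE)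
  then have "y = d u + scaleC \<i> (d v)"
    using decomposition(3) by metis
  then have "y = d (u + scaleC \<i> v)"
    by (simp add: d_linear)
  then show ?thesis
    by (simp add: y_def)
qed

lemma nondegenerate_hereditary_imp_complete:
  assumes "nondegenerate_transfer_operator d T" and "hereditary_subalgebra (range d)"
  shows "complete_transfer_operator d T"
proof -
  have T: "transfer_operator d T" and "d (T 1) = d 1"
    using assms(1) by (simp_all add: nondegenerate_transfer_operator_def)
  have "d (T a) = d 1 * a * d 1" for a
  proof -
    obtain c where c: "d 1 * a * d 1 = d c"
      using hereditary_corner_mem_range[OF assms(2)] by blast
    have "T a = T (d 1 * a * d 1)"
      using transfer_operatorD(8)[OF T] by simp
    also have "\<dots> = c * T 1"
      using c transfer_operatorD(5)[OF T] by simp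
    finally show ?thesis
      using \<open>d (T 1) = d 1\<close> c by (simp add: d_mult)
  qed
  then show ?thesis
    using T by (simp add: complete_transfer_operator_def)
qed

end

locale corner_isomorphism = star_endo +
  fixes P :: "'a::cstar_algebra"
  assumes cond3i: "cond3i d P" and range_eq_corner: "range d = {d 1 * a * d 1 | a. True}"
begin

lemma P: "cstar P = P" "P * P = P" "P * a = a * P" "d P = d 1"
  using cond3i unfolding cond3i_def central_projection_def by blast+

lemma inj_on_corner: "inj_on d (range (\<lambda>x. P * x))"
  using cond3i by (simp add: cond3i_def bij_betw_def)

lemma mem_corner_iff: "u \<in> range (\<lambda>x. P * x) \<longleftrightarrow> P * u = u"
proof
  assume "u \<in> range (\<lambda>x. P * x)"
  then obtain x where "u = P * x"
    by blast
  then show "P * u = u"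
    using P(2) by (simp flip: mult.assoc)
next
  assume "P * u = u"
  then show "u \<in> range (\<lambda>x. P * x)"
    by (metis rangeI)
qed

lemma corner_eq_if_d_eq: "P * u = u \<Longrightarrow> P * v = v \<Longrightarrow> d u = d v \<Longrightarrow> u = v"
  using inj_onD[OF inj_on_corner, of u v] by (simp add: mem_corner_iff)

lemma corner_mem_image: "d 1 * a * d 1 \<in> d ` range (\<lambda>x. P * x)"
  using cond3i range_eq_corner by (auto simp: cond3i_def bij_betw_def)

definition corner_transfer :: "'a \<Rightarrow> 'a" where
  "corner_transfer a = the_inv_into (range (\<lambda>x. P * x)) d (d 1 * a * d 1)"

lemma P_mult_corner_transfer: "P * corner_transfer a = corner_transfer a"
  using the_inv_into_into[OF inj_on_corner corner_mem_image order_refl]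
  by (simp add: corner_transfer_def mem_corner_iff)

lemma d_corner_transfer: "d (corner_transfer a) = d 1 * a * d 1"
  unfolding corner_transfer_def by (rule f_the_inv_into_f[OF inj_on_corner corner_mem_image])

lemma corner_transfer_eqI:
  assumes "P * u = u" "d u = d 1 * a * d 1"
  shows "corner_transfer a = u"
  using corner_eq_if_d_eq[OF P_mult_corner_transfer assms(1)] assms(2) by (simp add: d_corner_transfer)

lemma clinear_map_corner_transfer: "clinear_map corner_transfer"
  unfolding clinear_map_def
proof (intro conjI allI)
  fix x y :: 'a and c :: complex
  show "corner_transfer (x + y) = corner_transfer x + corner_transfer y"
    using P_mult_corner_transfer d_corner_transfer
    by (intro corner_transfer_eqI) (simp_all add: distrib_left distrib_right d_linear)
  show "corner_transfer (scaleC c x) = scaleC c (corner_transfer x)"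
    using P_mult_corner_transfer d_corner_transfer
    by (intro corner_transfer_eqI) (simp_all add: d_linear)
qed

lemma corner_transfer_mult_left: "corner_transfer (d a * b) = a * corner_transfer b"
proof (rule corner_transfer_eqI)
  have "P * (a * corner_transfer b) = a * (P * corner_transfer b)"
    using P(3)[of a] by (simp flip: mult.assoc)
  then show "P * (a * corner_transfer b) = a * corner_transfer b"
    by (simp add: P_mult_corner_transfer)
  have "d (a * corner_transfer b) = d a * b * d 1"
    using d_corner_transfer[of b] by (simp add: d_mult flip: mult.assoc)
  then show "d (a * corner_transfer b) = d 1 * (d a * b) * d 1"
    by (simp flip: mult.assoc)
qed

text \<open>The inverse of \<open>d c - z\<close> compressed to \<open>d(1) A d(1)\<close> lies in the range of \<open>d\<close>,
  so it pulls back to an inverse of \<open>c - z P\<close> in \<open>P A\<close>.\<close>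

lemma cstar_spectrum_subset:
  assumes c: "P * c = c" and "z \<noteq> 0" and z: "z \<in> cstar_spectrum c"
  shows "z \<in> cstar_spectrum (d c)"
proof (rule ccontr)
  assume "z \<notin> cstar_spectrum (d c)"
  then have invertible: "cstar_invertible (d c - scaleC z 1)"
    by (simp add: mem_cstar_spectrum)
  have "(d c - scaleC z 1) * d 1 = d 1 * (d c - scaleC z 1)"
    by (simp add: algebra_simps)
  note corner = compress_cstar_inverse[OF d_one_mult[of 1] this invertible]
  have compress: "d 1 * (d c - scaleC z 1) * d 1 = d (c - scaleC z P)"
    using P(4) by (simp add: algebra_simps d_linear)
  obtain v where "v \<in> range (\<lambda>x. P * x)" "d v = d 1 * cstar_inverse (d c - scaleC z 1) * d 1"
    using corner_mem_image[of "cstar_inverse (d c - scaleC z 1)"] by (metis imageE)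
  then have v: "P * v = v" "d v = d 1 * cstar_inverse (d c - scaleC z 1) * d 1"
    by (simp_all add: mem_corner_iff)
  have "P * (c - scaleC z P) = c - scaleC z P"
    using c P(2) by (simp add: right_diff_distrib)
  then have "P * ((c - scaleC z P) * v) = (c - scaleC z P) * v"
    by (simp flip: mult.assoc)
  moreover have "d ((c - scaleC z P) * v) = d P"
    unfolding d_mult compress[symmetric] v(2) using corner(1) P(4) by simp
  ultimately have left: "(c - scaleC z P) * v = P"
    by (rule corner_eq_if_d_eq[OF _ P(2)])
  have "P * (v * (c - scaleC z P)) = v * (c - scaleC z P)"
    using v(1) by (simp flip: mult.assoc)
  moreover have "d (v * (c - scaleC z P)) = d P"
    unfolding d_mult compress[symmetric] v(2) using corner(2) P(4) by simp
  ultimately have right: "v * (c - scaleC z P) = P"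
    by (rule corner_eq_if_d_eq[OF _ P(2)])
  have "c * P = c" "v * P = v"
    using c v(1) by (simp_all add: P(3)[of c, symmetric] P(3)[of v, symmetric])
  then have "cstar_invertible (c - scaleC z 1)"
    using c v(1) left right by (intro cstar_invertible_of_corner_inverse[OF \<open>z \<noteq> 0\<close>])
  then show False
    using z by (simp add: mem_cstar_spectrum)
qed

lemma corner_transfer_cstar: "corner_transfer (cstar a) = cstar (corner_transfer a)"
proof (rule corner_transfer_eqI)
  have "P * cstar (corner_transfer a) = cstar (corner_transfer a * P)"
    using P(1) by (simp add: cstar_mult)
  also have "corner_transfer a * P = P * corner_transfer a"
    by (rule P(3)[symmetric])
  also have "\<dots> = corner_transfer a"
    by (rule P_mult_corner_transfer)
  finally show "P * cstar (corner_transfer a) = cstar (corner_transfer a)" .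
  show "d (cstar (corner_transfer a)) = d 1 * cstar a * d 1"
    by (simp add: d_cstar d_corner_transfer cstar_mult mult.assoc)
qed

lemma cstar_positive_corner_transfer:
  assumes "cstar_positive a"
  shows "cstar_positive (corner_transfer a)"
proof (rule cstar_positiveI)
  show "cstar (corner_transfer a) = corner_transfer a"
    using cstar_positiveD(1)[OF assms] by (simp flip: corner_transfer_cstar)
  have positive: "cstar_positive (d (corner_transfer a))"
    using cstar_positive_compress[OF cstar_projection_d_one assms] by (simp add: d_corner_transfer)
  fix z
  assume z: "z \<in> cstar_spectrum (corner_transfer a)"
  show "Im z = 0 \<and> 0 \<le> Re z"
  proof (cases "z = 0")
    case False
    then have "z \<in> cstar_spectrum (d (corner_transfer a))"
      using cstar_spectrum_subset[OF P_mult_corner_transfer _ z] by simp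
    then show ?thesis
      using cstar_positiveD(2,3)[OF positive] by simp
  qed simp
qed

lemma norm_le_norm_d:
  assumes "P * c = c"
  shows "norm c \<le> norm (d c)"
proof -
  define h where "h = cstar c * c"
  have "P * h = cstar c * (P * c)"
    by (simp add: h_def P(3)[of "cstar c"] flip: mult.assoc)
  then have "P * h = h"
    using assms by (simp add: h_def)
  have "norm h \<le> norm (d h)"
  proof (rule norm_selfadjoint_le_spectral_bound)
    show "cstar h = h"
      by (simp add: h_def cstar_mult)
    fix z
    assume z: "z \<in> cstar_spectrum h"
    show "cmod z \<le> norm (d h)"
    proof (cases "z = 0")
      case False
      then show ?thesis
        by (rule cstar_spectrum_norm_le[OF cstar_spectrum_subset[OF \<open>P * h = h\<close> _ z]])
    qed simp
  qed simp
  moreover have "norm h = (norm c)\<^sup>2" "norm (d h) = (norm (d c))\<^sup>2"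
    using cstar_identity[of c] cstar_identity[of "d c"] by (simp_all add: h_def d_mult d_cstar)
  ultimately have "(norm c)\<^sup>2 \<le> (norm (d c))\<^sup>2"
    by simp
  then show ?thesis
    by (rule power2_le_imp_le) simp
qed

lemma norm_corner_transfer_le: "norm (corner_transfer a) \<le> norm a"
proof -
  have "norm (corner_transfer a) \<le> norm (d 1 * a * d 1)"
    using norm_le_norm_d[OF P_mult_corner_transfer] by (simp add: d_corner_transfer)
  also have "\<dots> \<le> norm (d 1) * norm a * norm (d 1)"
    by (rule norm_mult_mult_le)
  also have "\<dots> \<le> 1 * norm a * 1"
    using norm_cstar_projection_le[OF cstar_projection_d_one] by (intro mult_mono) auto
  finally show ?thesis
    by simp
qed

lemma complete_transfer_operator_corner_transfer: "complete_transfer_operator d corner_transfer"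
proof -
  note linear = clinear_map_simps[OF clinear_map_corner_transfer]
  have "bounded_linear corner_transfer"
    using linear norm_corner_transfer_le by (intro bounded_linear_intro[where K = 1]) auto
  then have "continuous_on UNIV corner_transfer"
    by (rule linear_continuous_on)
  then show ?thesis
    unfolding complete_transfer_operator_def transfer_operator_def
    using clinear_map_corner_transfer cstar_positive_corner_transfer corner_transfer_mult_left
      d_corner_transfer
    by blast
qed

end

context star_endo
begin

lemma cond3i_corner_imp_complete:
  assumes "cond3i d P" and "range d = {d 1 * a * d 1 | a. True}"
  shows "\<exists>T. complete_transfer_operator d T"
proof -
  interpret corner_isomorphism d P
    using assms by unfold_locales
  show ?thesis
    using complete_transfer_operator_corner_transfer by blast
qed

end

theorem theorem1:
  fixes d :: "'a::cstar_algebra \<Rightarrow> 'a"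
  assumes "star_endomorphism d"
  shows "((\<exists>T. complete_transfer_operator d T) \<longleftrightarrow>
           ((\<exists>T. nondegenerate_transfer_operator d T) \<and> hereditary_subalgebra (range d)))
       \<and> ((\<exists>T. complete_transfer_operator d T) \<longleftrightarrow>
           ((\<exists>P. cond3i d P) \<and> range d = {d 1 * a * d 1 | a. True}))
       \<and> ((\<exists>T. complete_transfer_operator d T) \<longrightarrow>
           (\<exists>!T. complete_transfer_operator d T) \<and> (\<exists>!T. nondegenerate_transfer_operator d T)
           \<and> (\<exists>!P. cond3i d P)
           \<and> (\<forall>T P. complete_transfer_operator d T \<longrightarrow> cond3i d P \<longrightarrow>
                 P = T 1 \<and> (\<forall>a. T a = the_inv_into (range (\<lambda>x. P * x)) d (d 1 * a * d 1))))"
proof -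
  interpret star_endo d
    using assms by unfold_locales
  have "(\<exists>T. complete_transfer_operator d T) \<longleftrightarrow>
      (\<exists>T. nondegenerate_transfer_operator d T) \<and> hereditary_subalgebra (range d)"
    using complete_imp_nondegenerate complete_imp_hereditary nondegenerate_hereditary_imp_complete
    by blast
  moreover have "(\<exists>T. complete_transfer_operator d T) \<longleftrightarrow>
      (\<exists>P. cond3i d P) \<and> range d = {d 1 * a * d 1 | a. True}"
    using nondegenerate_imp_cond3i complete_imp_nondegenerate complete_range_eq_corner
      cond3i_corner_imp_complete
    by blast
  moreover have "\<exists>!T. complete_transfer_operator d T" if "complete_transfer_operator d T" for T
    using that complete_transfer_operator_unique by blast
  moreover have "\<exists>!T'. nondegenerate_transfer_operator d T'" if "complete_transfer_operator d T" for T
    using that complete_imp_nondegenerate nondegenerate_transfer_operator_unique by blast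
  moreover have "\<exists>!P. cond3i d P" if "complete_transfer_operator d T" for T
    using nondegenerate_imp_cond3i[OF complete_imp_nondegenerate[OF that]] cond3i_unique by blast
  moreover have "P = T 1 \<and> (\<forall>a. T a = the_inv_into (range (\<lambda>x. P * x)) d (d 1 * a * d 1))"
    if "complete_transfer_operator d T" "cond3i d P" for T P
    using complete_transfer_operator_eq[OF that] by blast
  ultimately show ?thesis
    by blast
qed

end
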